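(* Let $\mathbb{T}=t_0t_1t_2\cdots\in\{0,1\}^\omega$ be the Thue–Morse word, where $t_n$ is the sum modulo 2 of the binary digits of $n$. Define $\varphi':\{0,1\}^+\to\{0,1,2\}$ by $\varphi'(u)=0$ if $u$ is a prefix of $\mathbb{T}$ ending with $0$, $\varphi'(u)=1$ if $u$ is a prefix of $\mathbb{T}$ ending with $1$, and $\varphi'(u)=2$ otherwise. Then $\mathbb{T}$ admits no $\varphi'$-monochromatic factorization.
   Context: A factorization $x=V_0V_1V_2\cdots$ with all $V_i$ non-empty finite words is $\varphi$-monochromatic if there is a color $c$ with $\varphi(V_i)=c$ for all $i\ge0$. *)

theory Defs
  imports Main
begin

fun bin_digit_sum :: "nat \<Rightarrow> nat" where
  "bin_digit_sum n = (if n = 0 then 0 else n mod 2 + bin_digit_sum (n div 2))"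

definition thue_morse :: "nat \<Rightarrow> nat" where
  "thue_morse n = bin_digit_sum n mod 2"

definition is_prefix_of :: "'a list \<Rightarrow> (nat \<Rightarrow> 'a) \<Rightarrow> bool" where
  "is_prefix_of u x \<longleftrightarrow> u = map x [0..<length u]"

(* the colouring phi' (only meaningful on non-empty words) *)
definition phi' :: "nat list \<Rightarrow> nat" where
  "phi' u = (if is_prefix_of u thue_morse \<and> u \<noteq> [] \<and> last u = 0 then 0
             else if is_prefix_of u thue_morse \<and> u \<noteq> [] \<and> last u = 1 then 1
             else 2)"

(* x = V 0 V 1 V 2 ... with all V i non-empty finite words *)
definition is_factorization :: "(nat \<Rightarrow> 'a) \<Rightarrow> (nat \<Rightarrow> 'a list) \<Rightarrow> bool" where
  "is_factorization x V \<longleftrightarrow>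
     (\<forall>i. V i \<noteq> []) \<and> (\<forall>n. is_prefix_of (concat (map V [0..<n])) x)"

definition monochromatic_factorization ::
  "('a list \<Rightarrow> 'c) \<Rightarrow> (nat \<Rightarrow> 'a) \<Rightarrow> (nat \<Rightarrow> 'a list) \<Rightarrow> bool" where
  "monochromatic_factorization \<phi> x V \<longleftrightarrow>
     is_factorization x V \<and> (\<exists>c. \<forall>i. \<phi> (V i) = c)"

end

theory Submission
  imports Defs
begin

text \<open>
  Suppose \<open>\<T> = V\<^sub>0V\<^sub>1V\<^sub>2\<cdots>\<close> with every \<open>V\<^sub>i\<close> a prefix of \<open>\<T>\<close> ending in the
  same letter \<open>c\<close>. Every block starts with \<open>0\<close>, and since \<open>\<T>\<close> has no factor
  \<open>000\<close>, \<open>111\<close>, \<open>01010\<close> or \<open>10101\<close>, no block has length 1 or 2. So every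
  block begins with \<open>011\<close>; as \<open>\<T>\<close> has equal adjacent letters only at odd
  positions, all blocks start at even positions, hence have even length at least 4.
  Applying \<open>t\<^sub>2\<^sub>n = t\<^sub>n\<close> halves every block and yields a factorization of the
  same kind with last letter \<open>1 - c\<close> and a strictly shorter first block,
  which is impossible by infinite descent.
\<close>

declare bin_digit_sum.simps[simp del]

lemma thue_morse_le_1: "thue_morse n \<le> 1"
  unfolding thue_morse_def by simp

lemma thue_morse_0 [simp]: "thue_morse 0 = 0"
  unfolding thue_morse_def by (subst bin_digit_sum.simps) simp

lemma thue_morse_double: "thue_morse (2 * n) = thue_morse n"
proof (cases "n = 0")
  case False
  then have "bin_digit_sum (2 * n) = bin_digit_sum n"
    by (subst bin_digit_sum.simps) simp
  then show ?thesis
    unfolding thue_morse_def by simp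
qed simp

lemma thue_morse_Suc_double: "thue_morse (Suc (2 * n)) = 1 - thue_morse n"
proof -
  have "bin_digit_sum (Suc (2 * n)) = Suc (bin_digit_sum n)"
    by (subst bin_digit_sum.simps) simp
  then show ?thesis
    unfolding thue_morse_def by presburger
qed

lemma thue_morse_1 [simp]: "thue_morse (Suc 0) = 1" "thue_morse 1 = 1"
  using thue_morse_Suc_double[of 0] by simp_all

lemma thue_morse_2 [simp]: "thue_morse (Suc (Suc 0)) = 1" "thue_morse 2 = 1"
  using thue_morse_double[of 1] by (simp_all add: numeral_2_eq_2)

lemma thue_morse_eq_Suc_imp_odd:
  assumes "thue_morse k = thue_morse (Suc k)"
  shows "odd k"
proof
  assume "even k"
  then obtain m where "k = 2 * m" ..
  then have "thue_morse m = 1 - thue_morse m"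
    using assms thue_morse_double[of m] thue_morse_Suc_double[of m] by simp
  then show False
    using thue_morse_le_1[of m] by arith
qed

lemma thue_morse_no_cube:
  "\<not> (thue_morse k = thue_morse (k + 1) \<and> thue_morse (k + 1) = thue_morse (k + 2))"
  using thue_morse_eq_Suc_imp_odd[of k] thue_morse_eq_Suc_imp_odd[of "k + 1"] by auto

lemma thue_morse_neq_neq:
  "thue_morse a \<noteq> thue_morse b \<Longrightarrow> thue_morse b \<noteq> thue_morse c \<Longrightarrow> thue_morse a = thue_morse c"
  using thue_morse_le_1[of a] thue_morse_le_1[of b] thue_morse_le_1[of c] by linarith

text \<open>No factor \<open>01010\<close> or \<open>10101\<close>: the letters of one parity class of positions
  would give, via \<open>t\<^sub>2\<^sub>n = t\<^sub>n\<close>, a cube \<open>t\<^sub>m t\<^sub>m\<^sub>+\<^sub>1 t\<^sub>m\<^sub>+\<^sub>2\<close>.\<close>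

lemma thue_morse_no_alternating_5:
  assumes "thue_morse q \<noteq> thue_morse (q + 1)" "thue_morse (q + 1) \<noteq> thue_morse (q + 2)"
    and "thue_morse (q + 2) \<noteq> thue_morse (q + 3)" "thue_morse (q + 3) \<noteq> thue_morse (q + 4)"
  shows False
proof (cases "even q")
  case True
  then obtain m where q: "q = 2 * m" ..
  have "q + 2 = 2 * (m + 1)" "q + 4 = 2 * (m + 2)"
    using q by simp_all
  then have "thue_morse m = thue_morse (m + 1)" "thue_morse (m + 1) = thue_morse (m + 2)"
    using assms thue_morse_neq_neq q by (metis thue_morse_double)+
  then show False
    using thue_morse_no_cube by blast
next
  case False
  then obtain m where q: "q = Suc (2 * m)"
    by (metis oddE Suc_eq_plus1)
  have "q + 1 = 2 * (m + 1)" "q + 3 = 2 * (m + 2)"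
    using q by simp_all
  then have q1: "thue_morse (q + 1) = thue_morse (m + 1)"
    and "thue_morse (q + 3) = thue_morse (m + 2)"
    by (metis thue_morse_double)+
  then have "thue_morse (m + 1) = thue_morse (m + 2)"
    using assms thue_morse_neq_neq by metis
  moreover have "thue_morse q = 1 - thue_morse m"
    using q thue_morse_Suc_double by simp
  then have "thue_morse m = thue_morse (m + 1)"
    using assms(1) q1 thue_morse_le_1[of m] thue_morse_le_1[of "m + 1"] by linarith
  ultimately show False
    using thue_morse_no_cube by blast
qed

text \<open>\<open>L\<close> lists the block lengths of a factorization of \<open>\<T>\<close> into prefixes of \<open>\<T>\<close>
  that all end with the letter \<open>c\<close>.\<close>

locale thue_morse_prefix_blocks =
  fixes L :: "nat \<Rightarrow> nat" and c :: nat
  assumes length_pos: "0 < L i"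
    and block_eq: "j < L i \<Longrightarrow> thue_morse ((\<Sum>k<i. L k) + j) = thue_morse j"
    and block_last: "thue_morse (L i - 1) = c"
begin

definition start :: "nat \<Rightarrow> nat" where
  "start i = (\<Sum>k<i. L k)"

lemma start_0 [simp]: "start 0 = 0"
  unfolding start_def by simp

lemma start_Suc: "start (Suc i) = start i + L i"
  unfolding start_def by simp

lemma thue_morse_start_add: "j < L i \<Longrightarrow> thue_morse (start i + j) = thue_morse j"
  unfolding start_def by (rule block_eq)

lemma thue_morse_start [simp]: "thue_morse (start i) = 0"
  using thue_morse_start_add[of 0 i] length_pos[of i] by simp

lemma thue_morse_before_start_Suc: "thue_morse (start (Suc i) - 1) = c"
  using thue_morse_start_add[of "L i - 1" i] length_pos[of i] block_last[of i]
  by (simp add: start_Suc)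

lemma start_pos: "0 < i \<Longrightarrow> 0 < start i"
  using length_pos by (cases i) (auto simp: start_Suc)

lemma thue_morse_before_start: "0 < i \<Longrightarrow> thue_morse (start i - 1) = c"
  using thue_morse_before_start_Suc by (cases i) auto

lemma length_ne_1: "L i \<noteq> 1"
proof
  assume L: "L i = 1"
  then have "c = 0"
    using block_last[of i] by simp
  have "thue_morse (start i + 1) = 0"
    using thue_morse_start[of "Suc i"] L by (simp add: start_Suc)
  moreover have "thue_morse (start i - 1) = 0" if "0 < i"
    using thue_morse_before_start[OF that] \<open>c = 0\<close> by simp
  ultimately show False
    using thue_morse_no_cube[of "start i - 1"] start_pos[of i] by (cases "i = 0") auto
qed

lemma length_ne_2: "L i \<noteq> 2"
proof
  assume L: "L i = 2"
  then have "c = 1"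
    using block_last[of i] by simp
  have "L (Suc i) \<ge> 2"
    using length_pos[of "Suc i"] length_ne_1[of "Suc i"] by simp
  then have "thue_morse (start i + 3) = 1"
    using thue_morse_start_add[of 1 "Suc i"] L by (simp add: start_Suc numeral_3_eq_3)
  moreover have "thue_morse (start i + 1) = 1" "thue_morse (start i + 2) = 0"
    using thue_morse_start_add[of 1 i] thue_morse_start[of "Suc i"] L
    by (simp_all add: start_Suc)
  moreover have "i \<noteq> 0"
    using \<open>thue_morse (start i + 2) = 0\<close> by (metis add_0 start_0 thue_morse_2(2) zero_neq_one)
  then have "thue_morse (start i - 1) = 1" "0 < start i"
    using thue_morse_before_start start_pos \<open>c = 1\<close> by simp_all
  ultimately show False
    using thue_morse_no_alternating_5[of "start i - 1"]
    by (simp add: numeral_3_eq_3 numeral_2_eq_2)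
qed

lemma length_ge_3: "L i \<ge> 3"
  using length_pos[of i] length_ne_1[of i] length_ne_2[of i] by simp

text \<open>Every block begins with \<open>011\<close>, and equal adjacent letters of \<open>\<T>\<close> sit at odd
  positions.\<close>

lemma odd_Suc_start: "odd (Suc (start i))"
  using thue_morse_eq_Suc_imp_odd[of "Suc (start i)"]
    thue_morse_start_add[of 1 i] thue_morse_start_add[of 2 i] length_ge_3[of i]
  by (simp add: numeral_2_eq_2)

lemma length_ne_3: "L i \<noteq> 3"
proof
  assume "L i = 3"
  then have "start (Suc i) = Suc (Suc (Suc (start i)))"
    by (simp add: start_Suc numeral_3_eq_3)
  then show False
    using odd_Suc_start[of i] odd_Suc_start[of "Suc i"] by simp
qed

lemma even_start: "even (start i)"
  using odd_Suc_start by simp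

lemma even_length: "even (L i)"
  using even_start[of i] even_start[of "Suc i"] by (simp add: start_Suc)

lemma length_ge_4: "L i \<ge> 4"
  using length_ge_3[of i] length_ne_3[of i] by simp

lemma halve: "thue_morse_prefix_blocks (\<lambda>i. L i div 2) (1 - c)"
proof
  fix i
  show "0 < L i div 2"
    using length_ge_4[of i] by simp
  have start_half: "2 * (\<Sum>k<i. L k div 2) = start i"
    unfolding start_def sum_distrib_left using even_length by (intro sum.cong) auto
  show "thue_morse ((\<Sum>k<i. L k div 2) + j) = thue_morse j" if "j < L i div 2" for j
  proof -
    have "thue_morse ((\<Sum>k<i. L k div 2) + j) = thue_morse (start i + 2 * j)"
      using thue_morse_double[of "(\<Sum>k<i. L k div 2) + j"] start_half
      by (simp add: add_mult_distrib2)
    also have "\<dots> = thue_morse (2 * j)"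
      using that by (intro thue_morse_start_add) linarith
    finally show ?thesis
      by (simp add: thue_morse_double)
  qed
  have "L i - 1 = Suc (2 * (L i div 2 - 1))"
    using length_ge_4[of i] even_length[of i] by auto
  then have "c = 1 - thue_morse (L i div 2 - 1)"
    using block_last[of i] thue_morse_Suc_double by simp
  then show "thue_morse (L i div 2 - 1) = 1 - c"
    using thue_morse_le_1[of "L i div 2 - 1"] by linarith
qed

end

lemma no_thue_morse_prefix_blocks: "\<not> thue_morse_prefix_blocks L c"
proof (induction "L 0" arbitrary: L c rule: less_induct)
  case less
  show ?case
  proof
    assume "thue_morse_prefix_blocks L c"
    then interpret thue_morse_prefix_blocks L c .
    show False
      using less halve length_ge_4[of 0] by fastforce
  qed
qed

lemma is_prefix_of_nth: "is_prefix_of u x \<Longrightarrow> k < length u \<Longrightarrow> u ! k = x k"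
  unfolding is_prefix_of_def by (metis add_0 diff_zero nth_map_upt)

lemma is_prefix_of_last: "is_prefix_of u x \<Longrightarrow> u \<noteq> [] \<Longrightarrow> last u = x (length u - 1)"
  by (simp add: is_prefix_of_nth last_conv_nth)

lemma factorization_nth:
  assumes "is_factorization x V" "j < length (V i)"
  shows "x ((\<Sum>k<i. length (V k)) + j) = V i ! j"
proof -
  define W where "W = concat (map V [0..<i])"
  have "length W = (\<Sum>k<i. length (V k))"
    unfolding W_def by (induction i) simp_all
  have "is_prefix_of (concat (map V [0..<Suc i])) x"
    using assms(1) unfolding is_factorization_def by blast
  then have "is_prefix_of (W @ V i) x"
    unfolding W_def by simp
  then have "x (length W + j) = (W @ V i) ! (length W + j)"
    using is_prefix_of_nth[of "W @ V i" x "length W + j"] assms(2) by simp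
  also have "\<dots> = V i ! j"
    by (rule nth_append_length_plus)
  finally show ?thesis
    using \<open>length W = (\<Sum>k<i. length (V k))\<close> by simp
qed

lemma monochromatic_factorization_prefix_blocks:
  assumes fact: "is_factorization thue_morse V" and col: "\<And>i. phi' (V i) = c"
  shows "thue_morse_prefix_blocks (\<lambda>i. length (V i)) c"
proof -
  have ne: "V i \<noteq> []" for i
    using fact unfolding is_factorization_def by blast
  have "is_prefix_of (concat (map V [0..<1])) thue_morse"
    using fact unfolding is_factorization_def by blast
  then have "is_prefix_of (V 0) thue_morse"
    by simp
  moreover have "last (V 0) \<le> 1"
    using is_prefix_of_last[OF calculation ne] thue_morse_le_1 by simp
  ultimately have "c \<noteq> 2"
    using col[of 0] ne[of 0] unfolding phi'_def by (auto split: if_splits)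
  then have pre: "is_prefix_of (V i) thue_morse" and lst: "last (V i) = c" for i
    using col[of i] unfolding phi'_def by (auto split: if_splits)
  show ?thesis
    using ne factorization_nth[OF fact] is_prefix_of_nth[OF pre] is_prefix_of_last[OF pre] lst
    by unfold_locales auto
qed

theorem mainTheorem11:
  shows "\<not> (\<exists>V. monochromatic_factorization phi' thue_morse V)"
  unfolding monochromatic_factorization_def
  using monochromatic_factorization_prefix_blocks no_thue_morse_prefix_blocks by blast

end
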